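(* Let $(X,d)$ be a metric space, $\lambda\ge0$, and $\ell\in\mathrm{LSC}(X)$ with $\inf_X\ell=0$. A function $u:X\to\mathbb{R}$ is a solution of $(\mathcal{G}_\lambda)$ if and only if it is a V-solution of $(\mathcal{G}_\lambda)$.
   Context: $\mathrm{LSC}(X)$ is the set of real-valued lower semicontinuous functions. Global slope: $G[u](x)=\sup_{y\neq x}\frac{(u(x)-u(y))_+}{d(x,y)}$ if $u(x)<+\infty$, $G[u](x)=+\infty$ otherwise. Pointwise notions for $(\mathcal{G}_\lambda)$: a subsolution is $u$ with $\inf_Xu=0$ and $\lambda u+G[u]\le\ell$ on $X$; a supersolution is a lower semicontinuous $v$ with $\inf_Xv=0$ and $\lambda v+G[v]\ge\ell$ on $X$; a solution is a lower semicontinuous function that is both. Viscosity notions: $u:X\to[0,+\infty)$ is a V-subsolution if $\inf_Xu=0$ and for every $x\in X$ and every $\phi:X\to\mathbb{R}$ with $\phi\ge u$, $\phi(x)=u(x)$ and $G[\phi](x)<+\infty$, one has $\lambda u(x)+G[\phi](x)\le\ell(x)$. A lower semicontinuous $v:X\to[0,+\infty)$ is a V-supersolution if $\inf_Xv=0$ and for every $x\in X$ and every $\psi:X\to\mathbb{R}$ with $\psi\le v$, $\psi(x)=v(x)$ and $G[\psi](x)<+\infty$, one has $\lambda v(x)+G[\psi](x)\ge\ell(x)$. A V-solution is a function in $\mathrm{LSC}(X)$ that is both a V-subsolution and a V-supersolution. *)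

theory Defs
  imports "HOL-Analysis.Analysis"
begin

definition lsc :: "('a::metric_space \<Rightarrow> real) \<Rightarrow> bool" where
  "lsc f \<longleftrightarrow> (\<forall>x t. t < f x \<longrightarrow> (\<forall>\<^sub>F y in nhds x. t < f y))"

text \<open>inf over X of f equals 0 (computed in the extended reals, so that
  it is meaningful also for unbounded functions).\<close>
definition inf_zero :: "('a \<Rightarrow> real) \<Rightarrow> bool" where
  "inf_zero f \<longleftrightarrow> (INF x. ereal (f x)) = 0"

text \<open>The supremum of nonnegative quantities is taken together with 0, so that
  the value is 0 on a one-point space.\<close>
definition global_slope :: "('a::metric_space \<Rightarrow> real) \<Rightarrow> 'a \<Rightarrow> ereal" where
  "global_slope u x =
     sup 0 (SUP y\<in>UNIV - {x}. ereal (max 0 (u x - u y) / dist x y))"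

definition is_subsolution :: "real \<Rightarrow> ('a::metric_space \<Rightarrow> real) \<Rightarrow> ('a \<Rightarrow> real) \<Rightarrow> bool" where
  "is_subsolution lam l u \<longleftrightarrow> inf_zero u \<and>
     (\<forall>x. ereal (lam * u x) + global_slope u x \<le> ereal (l x))"

definition is_supersolution :: "real \<Rightarrow> ('a::metric_space \<Rightarrow> real) \<Rightarrow> ('a \<Rightarrow> real) \<Rightarrow> bool" where
  "is_supersolution lam l v \<longleftrightarrow> lsc v \<and> inf_zero v \<and>
     (\<forall>x. ereal (lam * v x) + global_slope v x \<ge> ereal (l x))"

definition is_solution :: "real \<Rightarrow> ('a::metric_space \<Rightarrow> real) \<Rightarrow> ('a \<Rightarrow> real) \<Rightarrow> bool" where
  "is_solution lam l u \<longleftrightarrow> lsc u \<and> is_subsolution lam l u \<and> is_supersolution lam l u"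

definition is_V_subsolution :: "real \<Rightarrow> ('a::metric_space \<Rightarrow> real) \<Rightarrow> ('a \<Rightarrow> real) \<Rightarrow> bool" where
  "is_V_subsolution lam l u \<longleftrightarrow> (\<forall>x. 0 \<le> u x) \<and> inf_zero u \<and>
     (\<forall>x \<phi>. (\<forall>y. u y \<le> \<phi> y) \<longrightarrow> \<phi> x = u x \<longrightarrow> global_slope \<phi> x < \<infinity> \<longrightarrow>
        ereal (lam * u x) + global_slope \<phi> x \<le> ereal (l x))"

definition is_V_supersolution :: "real \<Rightarrow> ('a::metric_space \<Rightarrow> real) \<Rightarrow> ('a \<Rightarrow> real) \<Rightarrow> bool" where
  "is_V_supersolution lam l v \<longleftrightarrow> lsc v \<and> (\<forall>x. 0 \<le> v x) \<and> inf_zero v \<and>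
     (\<forall>x \<psi>. (\<forall>y. \<psi> y \<le> v y) \<longrightarrow> \<psi> x = v x \<longrightarrow> global_slope \<psi> x < \<infinity> \<longrightarrow>
        ereal (lam * v x) + global_slope \<psi> x \<ge> ereal (l x))"

definition is_V_solution :: "real \<Rightarrow> ('a::metric_space \<Rightarrow> real) \<Rightarrow> ('a \<Rightarrow> real) \<Rightarrow> bool" where
  "is_V_solution lam l u \<longleftrightarrow> lsc u \<and> is_V_subsolution lam l u \<and> is_V_supersolution lam l u"

end

theory Submission
  imports Defs
begin

text \<open>Touching a function from above at x can only decrease its global slope at x, and touching
  from below can only increase it; hence pointwise sub- and supersolutions are viscosity ones.
  Conversely, a V-supersolution may be tested with itself wherever its slope is finite, and the
  inequality is trivial where it is infinite. A V-subsolution u is tested with the cones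
  max u (u x - c d(x, \<cdot>)): they touch u from above at x, their slope at x is at most c, and for
  c the descent quotient of u between x and y they agree with u at y, so their slope at x is
  exactly that quotient. Taking the supremum over y bounds the global slope of u.\<close>

definition descent_quotient :: "('a::metric_space \<Rightarrow> real) \<Rightarrow> 'a \<Rightarrow> 'a \<Rightarrow> real" where
  "descent_quotient f x y = max 0 (f x - f y) / dist x y"

lemma global_slope_eq_descent_quotient:
  "global_slope f x = sup 0 (SUP y\<in>UNIV - {x}. ereal (descent_quotient f x y))"
  unfolding global_slope_def descent_quotient_def ..

lemma global_slope_nonneg: "0 \<le> global_slope f x"
  unfolding global_slope_def by simp

lemma descent_quotient_le_global_slope:
  assumes "y \<noteq> x"
  shows "ereal (descent_quotient f x y) \<le> global_slope f x"
  unfolding global_slope_eq_descent_quotient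
  by (rule order_trans[OF _ sup_ge2], rule SUP_upper) (use assms in auto)

lemma global_slope_leI:
  assumes "0 \<le> c" and "\<And>y. y \<noteq> x \<Longrightarrow> ereal (descent_quotient f x y) \<le> c"
  shows "global_slope f x \<le> c"
  unfolding global_slope_eq_descent_quotient
  using assms by (auto intro!: sup_least SUP_least)

lemma global_slope_mono:
  assumes "\<And>y. g x - g y \<le> f x - f y"
  shows "global_slope g x \<le> global_slope f x"
proof (rule global_slope_leI[OF global_slope_nonneg])
  fix y assume "y \<noteq> x"
  have "descent_quotient g x y \<le> descent_quotient f x y"
    using assms[of y] by (simp add: descent_quotient_def divide_right_mono)
  also have "ereal \<dots> \<le> global_slope f x"
    using \<open>y \<noteq> x\<close> by (rule descent_quotient_le_global_slope)
  finally show "ereal (descent_quotient g x y) \<le> global_slope f x" by simp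
qed

lemma global_slope_touching_above:
  assumes "\<forall>y. u y \<le> \<phi> y" and "\<phi> x = u x"
  shows "global_slope \<phi> x \<le> global_slope u x"
  by (rule global_slope_mono) (use assms in auto)

lemma global_slope_touching_below:
  assumes "\<forall>y. \<psi> y \<le> v y" and "\<psi> x = v x"
  shows "global_slope v x \<le> global_slope \<psi> x"
  by (rule global_slope_mono) (use assms in auto)

definition cone_cap :: "('a::metric_space \<Rightarrow> real) \<Rightarrow> 'a \<Rightarrow> real \<Rightarrow> 'a \<Rightarrow> real" where
  "cone_cap u x c y = max (u y) (u x - c * dist x y)"

lemma cone_cap_ge: "u y \<le> cone_cap u x c y"
  unfolding cone_cap_def by simp

lemma cone_cap_at_vertex: "cone_cap u x c x = u x"
  unfolding cone_cap_def by simp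

lemma global_slope_cone_cap_le:
  assumes "0 \<le> c"
  shows "global_slope (cone_cap u x c) x \<le> ereal c"
proof (rule global_slope_leI)
  fix y assume "y \<noteq> x"
  then have "0 < dist x y" by simp
  moreover have "max 0 (cone_cap u x c x - cone_cap u x c y) \<le> c * dist x y"
    using assms \<open>0 < dist x y\<close> by (auto simp: cone_cap_def)
  ultimately show "ereal (descent_quotient (cone_cap u x c) x y) \<le> ereal c"
    by (simp add: descent_quotient_def divide_le_eq)
qed (use assms in simp)

lemma descent_quotient_le_global_slope_cone_cap:
  assumes "y \<noteq> x"
  shows "ereal (descent_quotient u x y) \<le> global_slope (cone_cap u x (descent_quotient u x y)) x"
proof -
  have "0 < dist x y" using assms by simp
  then have "cone_cap u x (descent_quotient u x y) y = u y"
    by (simp add: cone_cap_def descent_quotient_def)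
  then have "descent_quotient (cone_cap u x (descent_quotient u x y)) x y = descent_quotient u x y"
    by (simp add: descent_quotient_def cone_cap_at_vertex)
  then show ?thesis
    using descent_quotient_le_global_slope[OF assms] by metis
qed

lemma inf_zero_imp_nonneg: "inf_zero u \<Longrightarrow> 0 \<le> u x"
  unfolding inf_zero_def by (metis INF_lower UNIV_I ereal_less_eq(5))

lemma subsolution_imp_V_subsolution:
  assumes "is_subsolution lam l u"
  shows "is_V_subsolution lam l u"
  unfolding is_V_subsolution_def
proof (intro conjI allI impI)
  show "inf_zero u" using assms is_subsolution_def by blast
  then show "\<And>x. 0 \<le> u x" by (rule inf_zero_imp_nonneg)
  fix x \<phi> assume "\<forall>y. u y \<le> \<phi> y" "\<phi> x = u x"
  then have "ereal (lam * u x) + global_slope \<phi> x \<le> ereal (lam * u x) + global_slope u x"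
    by (intro add_left_mono global_slope_touching_above)
  also have "\<dots> \<le> ereal (l x)" using assms unfolding is_subsolution_def by blast
  finally show "ereal (lam * u x) + global_slope \<phi> x \<le> ereal (l x)" .
qed

lemma V_subsolution_imp_subsolution:
  assumes "is_V_subsolution lam l u"
  shows "is_subsolution lam l u"
  unfolding is_subsolution_def
proof (intro conjI allI)
  show "inf_zero u" using assms is_V_subsolution_def by blast
  fix x
  have cone_test: "lam * u x + c \<le> l x"
    if "0 \<le> c" and "ereal c \<le> global_slope (cone_cap u x c) x" for c
  proof -
    have "global_slope (cone_cap u x c) x < \<infinity>"
      using global_slope_cone_cap_le[OF \<open>0 \<le> c\<close>, of u x] by (rule le_less_trans) simp
    then have "ereal (lam * u x) + global_slope (cone_cap u x c) x \<le> ereal (l x)"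
      using assms cone_cap_ge cone_cap_at_vertex unfolding is_V_subsolution_def by blast
    then have "ereal (lam * u x) + ereal c \<le> ereal (l x)"
      using that(2) by (meson add_left_mono order_trans)
    then show ?thesis by simp
  qed
  have "global_slope u x \<le> ereal (l x - lam * u x)"
  proof (rule global_slope_leI)
    show "0 \<le> ereal (l x - lam * u x)"
      using cone_test[of 0] global_slope_nonneg[of "cone_cap u x 0" x]
      by (simp add: zero_ereal_def)
    fix y assume "y \<noteq> x"
    then have "lam * u x + descent_quotient u x y \<le> l x"
      by (intro cone_test descent_quotient_le_global_slope_cone_cap)
        (simp add: descent_quotient_def)
    then show "ereal (descent_quotient u x y) \<le> ereal (l x - lam * u x)" by simp
  qed
  then have "ereal (lam * u x) + global_slope u x \<le> ereal (lam * u x) + ereal (l x - lam * u x)"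
    by (rule add_left_mono)
  then show "ereal (lam * u x) + global_slope u x \<le> ereal (l x)" by simp
qed

lemma is_V_subsolution_iff: "is_V_subsolution lam l u \<longleftrightarrow> is_subsolution lam l u"
  using V_subsolution_imp_subsolution subsolution_imp_V_subsolution by blast

lemma is_V_supersolution_iff: "is_V_supersolution lam l v \<longleftrightarrow> is_supersolution lam l v"
proof
  assume V: "is_V_supersolution lam l v"
  have "ereal (l x) \<le> ereal (lam * v x) + global_slope v x" for x
  proof (cases "global_slope v x < \<infinity>")
    case True
    then show ?thesis using V unfolding is_V_supersolution_def by blast
  qed simp
  then show "is_supersolution lam l v"
    using V unfolding is_V_supersolution_def is_supersolution_def by blast
next
  assume super: "is_supersolution lam l v"
  show "is_V_supersolution lam l v"
    unfolding is_V_supersolution_def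
  proof (intro conjI allI impI)
    show "lsc v" "inf_zero v" using super is_supersolution_def by blast+
    then show "\<And>x. 0 \<le> v x" by (intro inf_zero_imp_nonneg)
    fix x \<psi> assume "\<forall>y. \<psi> y \<le> v y" "\<psi> x = v x"
    have "ereal (l x) \<le> ereal (lam * v x) + global_slope v x"
      using super unfolding is_supersolution_def by blast
    also have "\<dots> \<le> ereal (lam * v x) + global_slope \<psi> x"
      using \<open>\<forall>y. \<psi> y \<le> v y\<close> \<open>\<psi> x = v x\<close>
      by (intro add_left_mono global_slope_touching_below)
    finally show "ereal (l x) \<le> ereal (lam * v x) + global_slope \<psi> x" .
  qed
qed

theorem theorem4p4:
  fixes lam :: real and l u :: "'a::metric_space \<Rightarrow> real"
  assumes "lam \<ge> 0" and "lsc l" and "inf_zero l"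
  shows "is_solution lam l u \<longleftrightarrow> is_V_solution lam l u"
  by (simp add: is_solution_def is_V_solution_def is_V_subsolution_iff is_V_supersolution_iff)

end
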